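(* Let $(X,\tau)$ be a locally convex Hausdorff space, $\widetilde{\tau}$ a locally convex Hausdorff topology on $X$, and suppose $(X,\widetilde{\gamma})$, $\widetilde{\gamma}=\widetilde{\gamma}(\tau,\widetilde{\tau})$, satisfies $(\mathrm{B}\tau\mathrm{B}\widetilde{\gamma})$. Then $(X,\widetilde{\gamma})$ is a semi-Montel space if and only if $(X,\tau)$ satisfies (BBC) for $\widetilde{\tau}$.
   Context: lcH = locally convex Hausdorff. (BBC) for $\widetilde{\tau}$: every $\tau$-bounded subset of $X$ is contained in an absolutely convex $\tau$-bounded $\widetilde{\tau}$-compact set. $\widetilde{\gamma}(\tau,\widetilde{\tau})$: the finest lcH topology on $X$ coinciding with $\widetilde{\tau}$ on all $\tau$-bounded sets; $(X,\widetilde{\gamma})$ satisfies $(\mathrm{B}\tau\mathrm{B}\widetilde{\gamma})$ if a subset of $X$ is $\tau$-bounded iff it is $\widetilde{\gamma}$-bounded. *)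

theory Defs
  imports "HOL-Analysis.Analysis"
begin

definition vector_topology :: "'a::real_vector topology \<Rightarrow> bool" where
  "vector_topology T \<longleftrightarrow> topspace T = UNIV \<and>
     continuous_map (prod_topology T T) T (\<lambda>(x, y). x + y) \<and>
     continuous_map (prod_topology euclideanreal T) T (\<lambda>(a, x). a *\<^sub>R x)"

definition lcH_topology :: "'a::real_vector topology \<Rightarrow> bool" where
  "lcH_topology T \<longleftrightarrow> vector_topology T \<and> Hausdorff_space T \<and>
     (\<forall>U. openin T U \<and> 0 \<in> U \<longrightarrow> (\<exists>V. openin T V \<and> 0 \<in> V \<and> convex V \<and> V \<subseteq> U))"

definition balanced_set :: "'a::real_vector set \<Rightarrow> bool" where
  "balanced_set S \<longleftrightarrow> (\<forall>a x. \<bar>a\<bar> \<le> 1 \<and> x \<in> S \<longrightarrow> a *\<^sub>R x \<in> S)"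

definition absolutely_convex :: "'a::real_vector set \<Rightarrow> bool" where
  "absolutely_convex S \<longleftrightarrow> convex S \<and> balanced_set S"

definition tvs_bounded :: "'a::real_vector topology \<Rightarrow> 'a set \<Rightarrow> bool" where
  "tvs_bounded T S \<longleftrightarrow>
     (\<forall>U. openin T U \<and> 0 \<in> U \<longrightarrow> (\<exists>t>0. S \<subseteq> (\<lambda>x. t *\<^sub>R x) ` U))"

definition is_gamma_tilde :: "'a::real_vector topology \<Rightarrow> 'a topology \<Rightarrow> 'a topology \<Rightarrow> bool" where
  "is_gamma_tilde t tt g \<longleftrightarrow>
     lcH_topology g \<and>
     (\<forall>B. tvs_bounded t B \<longrightarrow> subtopology g B = subtopology tt B) \<and>
     (\<forall>s. lcH_topology s \<and> (\<forall>B. tvs_bounded t B \<longrightarrow> subtopology s B = subtopology tt B)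
          \<longrightarrow> (\<forall>U. openin s U \<longrightarrow> openin g U))"

definition semi_Montel :: "'a::real_vector topology \<Rightarrow> bool" where
  "semi_Montel T \<longleftrightarrow> (\<forall>B. tvs_bounded T B \<longrightarrow> compactin T (T closure_of B))"

definition BBC :: "'a::real_vector topology \<Rightarrow> 'a topology \<Rightarrow> bool" where
  "BBC t tt \<longleftrightarrow> (\<forall>B. tvs_bounded t B \<longrightarrow>
     (\<exists>K. B \<subseteq> K \<and> absolutely_convex K \<and> tvs_bounded t K \<and> compactin tt K))"

definition same_bounded :: "'a::real_vector topology \<Rightarrow> 'a topology \<Rightarrow> bool" where
  "same_bounded t g \<longleftrightarrow> (\<forall>B. tvs_bounded t B \<longleftrightarrow> tvs_bounded g B)"

end

theory Submission
  imports Defs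
begin

text \<open>
  On a \<open>t\<close>-bounded set the topologies \<open>g\<close> and \<open>tt\<close> coincide, so a \<open>t\<close>-bounded set is
  \<open>g\<close>-compact iff it is \<open>tt\<close>-compact; and \<open>t\<close> and \<open>g\<close> have the same bounded sets.
  If \<open>g\<close> is semi-Montel, the \<open>g\<close>-closure of the absolutely convex hull of a \<open>t\<close>-bounded set
  is \<open>g\<close>-compact, hence bounded, hence \<open>tt\<close>-compact, and it is absolutely convex, which
  gives (BBC). Conversely, a \<open>g\<close>-bounded set lies in a \<open>t\<close>-bounded \<open>tt\<close>-compact set \<open>K\<close>;
  then \<open>K\<close> is \<open>g\<close>-compact, hence \<open>g\<close>-closed, and contains the \<open>g\<close>-closure of the set.
\<close>

lemma lcH_topology_imp_vector_topology: "lcH_topology T \<Longrightarrow> vector_topology T"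
  by (simp add: lcH_topology_def)

lemma lcH_topology_topspace: "lcH_topology T \<Longrightarrow> topspace T = UNIV"
  by (simp add: lcH_topology_def vector_topology_def)

lemma vector_topology_continuous_scaleR:
  assumes "vector_topology T"
  shows "continuous_map T T (\<lambda>x. c *\<^sub>R x)"
proof -
  have "continuous_map T (prod_topology euclideanreal T) (\<lambda>x. (c, x))"
    by (intro continuous_map_pairedI continuous_map_id continuous_map_const[THEN iffD2]) auto
  then have "continuous_map T T ((\<lambda>(a, x). a *\<^sub>R x) \<circ> (\<lambda>x. (c, x)))"
    using continuous_map_compose assms unfolding vector_topology_def by blast
  then show ?thesis by (simp add: o_def)
qed

lemma vector_topology_continuous_scaleR_left:
  assumes "vector_topology T"
  shows "continuous_map euclideanreal T (\<lambda>a. a *\<^sub>R x)"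
proof -
  have "continuous_map euclideanreal (prod_topology euclideanreal T) (\<lambda>a. (a, x))"
    using assms unfolding vector_topology_def
    by (intro continuous_map_pairedI continuous_map_id continuous_map_const[THEN iffD2]) auto
  then have "continuous_map euclideanreal T ((\<lambda>(a, x). a *\<^sub>R x) \<circ> (\<lambda>a. (a, x)))"
    using continuous_map_compose assms unfolding vector_topology_def by blast
  then show ?thesis by (simp add: o_def)
qed

lemma vector_topology_continuous_lincomb:
  assumes "vector_topology T"
  shows "continuous_map (prod_topology T T) T (\<lambda>(x, y). u *\<^sub>R x + v *\<^sub>R y)"
proof -
  have "continuous_map (prod_topology T T) (prod_topology T T) (\<lambda>(x, y). (u *\<^sub>R x, v *\<^sub>R y))"
    using vector_topology_continuous_scaleR[OF assms] by (simp add: continuous_map_prod_top)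
  then have "continuous_map (prod_topology T T) T ((\<lambda>(x, y). x + y) \<circ> (\<lambda>(x, y). (u *\<^sub>R x, v *\<^sub>R y)))"
    using continuous_map_compose assms unfolding vector_topology_def by blast
  then show ?thesis by (simp add: o_def case_prod_unfold)
qed

lemma vector_topology_openin_scaleR:
  assumes "vector_topology T" "openin T U" "c \<noteq> 0"
  shows "openin T ((\<lambda>x. c *\<^sub>R x) ` U)"
proof -
  have "(\<lambda>x. c *\<^sub>R x) ` U = {x \<in> topspace T. inverse c *\<^sub>R x \<in> U}"
    using assms(1,3) unfolding vector_topology_def by (force simp: image_iff)
  then show ?thesis
    using openin_continuous_map_preimage[OF vector_topology_continuous_scaleR[OF assms(1)] assms(2)]
    by simp
qed

lemma vector_topology_nhd_absorbing:
  assumes "vector_topology T" "openin T W" "0 \<in> W"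
  shows "\<exists>n\<ge>1. x \<in> (\<lambda>y. real n *\<^sub>R y) ` W"
proof -
  have "openin euclideanreal {a \<in> topspace euclideanreal. a *\<^sub>R x \<in> W}"
    using openin_continuous_map_preimage[OF vector_topology_continuous_scaleR_left[OF assms(1)] assms(2)] .
  then have "open {a::real. a *\<^sub>R x \<in> W}" by simp
  moreover have "(0::real) \<in> {a. a *\<^sub>R x \<in> W}" using assms(3) by simp
  ultimately obtain e where "e > 0" and e: "ball 0 e \<subseteq> {a. a *\<^sub>R x \<in> W}"
    using open_contains_ball by blast
  then obtain n where n: "inverse (real (Suc n)) < e"
    using reals_Archimedean by blast
  then have "inverse (real (Suc n)) \<in> ball 0 e" by simp
  then have "inverse (real (Suc n)) *\<^sub>R x \<in> W"
    using e by blast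
  then have "x \<in> (\<lambda>y. real (Suc n) *\<^sub>R y) ` W"
    by (auto intro: image_eqI[where x = "inverse (real (Suc n)) *\<^sub>R x"])
  then show ?thesis by (metis Suc_eq_plus1 le_add2)
qed

lemma convex_symmetric_imp_balanced:
  assumes "convex V" "\<And>x. x \<in> V \<Longrightarrow> - x \<in> V"
  shows "balanced_set V"
  unfolding balanced_set_def
proof (intro allI impI)
  fix a x assume h: "\<bar>a\<bar> \<le> (1::real) \<and> x \<in> V"
  have "((1 + a) / 2) *\<^sub>R x + ((1 - a) / 2) *\<^sub>R (- x) \<in> V"
    using h assms by (intro convexD[OF assms(1)]) (auto simp: field_simps)
  moreover have "((1 + a) / 2) *\<^sub>R x + ((1 - a) / 2) *\<^sub>R (- x) = a *\<^sub>R x"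
    by (simp add: algebra_simps scaleR_left_distrib[symmetric] divide_simps)
  ultimately show "a *\<^sub>R x \<in> V" by simp
qed

lemma absolutely_convex_Inter:
  assumes "\<And>S. S \<in> \<F> \<Longrightarrow> absolutely_convex S"
  shows "absolutely_convex (\<Inter>\<F>)"
  using assms unfolding absolutely_convex_def balanced_set_def
  by (auto intro: convex_Inter)

lemma absolutely_convex_scaleR:
  assumes "absolutely_convex S"
  shows "absolutely_convex ((\<lambda>x. c *\<^sub>R x) ` S)"
proof -
  have "a *\<^sub>R c *\<^sub>R x \<in> (\<lambda>x. c *\<^sub>R x) ` S" if "\<bar>a\<bar> \<le> 1" "x \<in> S" for a x
    using assms that unfolding absolutely_convex_def balanced_set_def
    by (metis image_eqI scaleR_left_commute)
  then show ?thesis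
    using assms convex_scaling unfolding absolutely_convex_def balanced_set_def by blast
qed

lemma balanced_scaleR_mono:
  assumes "balanced_set W" "0 < s" "s \<le> r"
  shows "(\<lambda>x. s *\<^sub>R x) ` W \<subseteq> (\<lambda>x. r *\<^sub>R x) ` W"
proof
  fix y assume "y \<in> (\<lambda>x. s *\<^sub>R x) ` W"
  then obtain x where x: "x \<in> W" "y = s *\<^sub>R x" by auto
  have "(s / r) *\<^sub>R x \<in> W" using assms x(1) unfolding balanced_set_def by auto
  moreover have "y = r *\<^sub>R ((s / r) *\<^sub>R x)" using x(2) assms by simp
  ultimately show "y \<in> (\<lambda>x. r *\<^sub>R x) ` W" by blast
qed

lemma lcH_absolutely_convex_nhd:
  assumes "lcH_topology T" "openin T U" "0 \<in> U"
  obtains W where "openin T W" "0 \<in> W" "absolutely_convex W" "W \<subseteq> U"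
proof -
  have vt: "vector_topology T" using lcH_topology_imp_vector_topology[OF assms(1)] .
  obtain V where V: "openin T V" "0 \<in> V" "convex V" "V \<subseteq> U"
    using assms unfolding lcH_topology_def by blast
  define W where "W = V \<inter> uminus ` V"
  have "openin T {x \<in> topspace T. (- 1) *\<^sub>R x \<in> V}"
    by (rule openin_continuous_map_preimage[OF vector_topology_continuous_scaleR[OF vt] V(1)])
  moreover have "uminus ` V = {x \<in> topspace T. (- 1) *\<^sub>R x \<in> V}"
    using vt unfolding vector_topology_def by force
  ultimately have "openin T W"
    unfolding W_def using V(1) by (simp add: openin_Int)
  moreover have "convex W"
    unfolding W_def using V(3) convex_negations by (blast intro: convex_Int)
  moreover have "- x \<in> W" if "x \<in> W" for x
    using that unfolding W_def by force
  ultimately have "absolutely_convex W"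
    unfolding absolutely_convex_def by (blast intro: convex_symmetric_imp_balanced)
  moreover have "0 \<in> W" "W \<subseteq> U" using V unfolding W_def by auto
  ultimately show ?thesis using that \<open>openin T W\<close> by blast
qed

lemma compactin_imp_tvs_bounded:
  assumes "lcH_topology T" "compactin T K"
  shows "tvs_bounded T K"
  unfolding tvs_bounded_def
proof (intro allI impI)
  fix U assume "openin T U \<and> 0 \<in> U"
  then obtain W where W: "openin T W" "0 \<in> W" "absolutely_convex W" "W \<subseteq> U"
    using lcH_absolutely_convex_nhd[OF assms(1)] by blast
  have vt: "vector_topology T" using lcH_topology_imp_vector_topology[OF assms(1)] .
  define nW where "nW n = (\<lambda>x. real n *\<^sub>R x) ` W" for n :: nat
  have "K \<subseteq> \<Union>(nW ` {1..})"
    using vector_topology_nhd_absorbing[OF vt W(1,2)] unfolding nW_def by blast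
  moreover have "\<forall>B \<in> nW ` {1..}. openin T B"
    using vector_topology_openin_scaleR[OF vt W(1)] unfolding nW_def by simp
  ultimately obtain \<F> where "finite \<F>" "\<F> \<subseteq> nW ` {1..}" "K \<subseteq> \<Union>\<F>"
    using assms(2) unfolding compactin_def by meson
  then obtain F where F: "finite F" "F \<subseteq> {1..}" "K \<subseteq> \<Union>(nW ` F)"
    using finite_subset_image[of \<F> nW "{1..}"] by blast
  define N where "N = Max (insert 1 F)"
  have "N \<ge> 1" using F unfolding N_def by simp
  have "nW n \<subseteq> nW N" if "n \<in> F" for n
    using W(3) F that unfolding nW_def N_def absolutely_convex_def
    by (intro balanced_scaleR_mono) auto
  with F have "K \<subseteq> nW N" by blast
  also have "\<dots> \<subseteq> (\<lambda>x. real N *\<^sub>R x) ` U"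
    unfolding nW_def using W(4) by blast
  finally show "\<exists>t>0. K \<subseteq> (\<lambda>x. t *\<^sub>R x) ` U"
    using \<open>N \<ge> 1\<close> by (intro exI[of _ "real N"]) simp
qed

lemma tvs_bounded_absolutely_convex_hull:
  assumes "lcH_topology T" "tvs_bounded T B"
  shows "tvs_bounded T (absolutely_convex hull B)"
  unfolding tvs_bounded_def
proof (intro allI impI)
  fix U assume "openin T U \<and> 0 \<in> U"
  then obtain W where W: "openin T W" "0 \<in> W" "absolutely_convex W" "W \<subseteq> U"
    using lcH_absolutely_convex_nhd[OF assms(1)] by blast
  obtain s where "s > 0" and s: "B \<subseteq> (\<lambda>x. s *\<^sub>R x) ` W"
    using assms(2) W unfolding tvs_bounded_def by blast
  have "absolutely_convex hull B \<subseteq> (\<lambda>x. s *\<^sub>R x) ` W"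
    by (rule hull_minimal[OF s]) (rule absolutely_convex_scaleR[OF W(3)])
  also have "\<dots> \<subseteq> (\<lambda>x. s *\<^sub>R x) ` U"
    using W(4) by (rule image_mono)
  finally show "\<exists>t>0. absolutely_convex hull B \<subseteq> (\<lambda>x. t *\<^sub>R x) ` U"
    using \<open>s > 0\<close> by blast
qed

lemma image_closure_of_subset_closure_of:
  assumes "continuous_map X Y f" "f ` A \<subseteq> B"
  shows "f ` (X closure_of A) \<subseteq> Y closure_of B"
  by (meson assms closure_of_mono continuous_map_image_closure_subset order_trans)

lemma absolutely_convex_closure_of:
  assumes "vector_topology T" "absolutely_convex A"
  shows "absolutely_convex (T closure_of A)"
proof -
  have "convex (T closure_of A)"
  proof (rule convexI)
    fix x y and u v :: real
    assume "x \<in> T closure_of A" "y \<in> T closure_of A" "0 \<le> u" "0 \<le> v" "u + v = 1"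
    let ?f = "\<lambda>(x, y). u *\<^sub>R x + v *\<^sub>R y"
    have "?f ` (A \<times> A) \<subseteq> A"
      using assms(2) \<open>0 \<le> u\<close> \<open>0 \<le> v\<close> \<open>u + v = 1\<close>
      unfolding absolutely_convex_def convex_def by auto
    then have "?f ` (prod_topology T T closure_of (A \<times> A)) \<subseteq> T closure_of A"
      by (rule image_closure_of_subset_closure_of[OF vector_topology_continuous_lincomb[OF assms(1)]])
    moreover have "(x, y) \<in> prod_topology T T closure_of (A \<times> A)"
      by (simp add: closure_of_Times \<open>x \<in> T closure_of A\<close> \<open>y \<in> T closure_of A\<close>)
    ultimately show "u *\<^sub>R x + v *\<^sub>R y \<in> T closure_of A"
      by (metis (no_types, lifting) case_prod_conv image_subset_iff)
  qed
  moreover have "balanced_set (T closure_of A)"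
    unfolding balanced_set_def
  proof (intro allI impI)
    fix a x assume h: "\<bar>a\<bar> \<le> (1::real) \<and> x \<in> T closure_of A"
    then have "(\<lambda>x. a *\<^sub>R x) ` A \<subseteq> A"
      using assms(2) unfolding absolutely_convex_def balanced_set_def by auto
    then have "(\<lambda>x. a *\<^sub>R x) ` (T closure_of A) \<subseteq> T closure_of A"
      by (rule image_closure_of_subset_closure_of[OF vector_topology_continuous_scaleR[OF assms(1)]])
    with h show "a *\<^sub>R x \<in> T closure_of A" by blast
  qed
  ultimately show ?thesis unfolding absolutely_convex_def by blast
qed

lemma is_gamma_tilde_lcH_topology: "is_gamma_tilde t tt g \<Longrightarrow> lcH_topology g"
  by (simp add: is_gamma_tilde_def)

lemma gamma_tilde_compactin_iff:
  assumes "lcH_topology tt" "is_gamma_tilde t tt g" "tvs_bounded t K"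
  shows "compactin g K \<longleftrightarrow> compactin tt K"
proof -
  have "subtopology g K = subtopology tt K"
    using assms(2,3) unfolding is_gamma_tilde_def by blast
  then show ?thesis
    using lcH_topology_topspace[OF assms(1)]
      lcH_topology_topspace[OF is_gamma_tilde_lcH_topology[OF assms(2)]]
    by (simp add: compactin_subspace)
qed

lemma semi_Montel_imp_BBC:
  assumes "lcH_topology t" "lcH_topology tt" "is_gamma_tilde t tt g" "same_bounded t g"
    and "semi_Montel g"
  shows "BBC t tt"
  unfolding BBC_def
proof (intro allI impI)
  fix B assume "tvs_bounded t B"
  define A where "A = absolutely_convex hull B"
  define K where "K = g closure_of A"
  have lcH_g: "lcH_topology g" using is_gamma_tilde_lcH_topology[OF assms(3)] .
  have "tvs_bounded t A"
    unfolding A_def using tvs_bounded_absolutely_convex_hull[OF assms(1)] \<open>tvs_bounded t B\<close> .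
  then have "compactin g K"
    using assms(4,5) unfolding semi_Montel_def same_bounded_def K_def by blast
  then have "tvs_bounded t K"
    using compactin_imp_tvs_bounded[OF lcH_g] assms(4) unfolding same_bounded_def by blast
  moreover have "compactin tt K"
    using gamma_tilde_compactin_iff[OF assms(2,3) \<open>tvs_bounded t K\<close>] \<open>compactin g K\<close> by simp
  moreover have "absolutely_convex A"
    unfolding A_def by (rule hull_in, rule absolutely_convex_Inter) blast
  then have "absolutely_convex K"
    unfolding K_def by (rule absolutely_convex_closure_of[OF lcH_topology_imp_vector_topology[OF lcH_g]])
  moreover have "B \<subseteq> K"
  proof -
    have "B \<subseteq> A" unfolding A_def by (rule hull_subset)
    also have "\<dots> \<subseteq> K"
      unfolding K_def by (rule closure_of_subset) (simp add: lcH_topology_topspace[OF lcH_g])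
    finally show ?thesis .
  qed
  ultimately show "\<exists>K. B \<subseteq> K \<and> absolutely_convex K \<and> tvs_bounded t K \<and> compactin tt K"
    by blast
qed

lemma BBC_imp_semi_Montel:
  assumes "lcH_topology tt" "is_gamma_tilde t tt g"
    and "\<And>B. tvs_bounded g B \<Longrightarrow> tvs_bounded t B"
    and "BBC t tt"
  shows "semi_Montel g"
  unfolding semi_Montel_def
proof (intro allI impI)
  fix B assume "tvs_bounded g B"
  then obtain K where K: "B \<subseteq> K" "tvs_bounded t K" "compactin tt K"
    using assms(3,4) unfolding BBC_def by blast
  then have "compactin g K"
    using gamma_tilde_compactin_iff[OF assms(1,2)] by blast
  moreover have "Hausdorff_space g"
    using is_gamma_tilde_lcH_topology[OF assms(2)] unfolding lcH_topology_def by blast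
  ultimately have "g closure_of B \<subseteq> K"
    using K(1) closure_of_minimal compactin_imp_closedin by blast
  then show "compactin g (g closure_of B)"
    by (rule closed_compactin[OF \<open>compactin g K\<close>]) simp
qed

theorem corollary3p14:
  fixes t tt g :: "'a::real_vector topology"
  assumes "lcH_topology t" and "lcH_topology tt"
    and "is_gamma_tilde t tt g"
    and "same_bounded t g"
  shows "semi_Montel g \<longleftrightarrow> BBC t tt"
  using semi_Montel_imp_BBC[OF assms] BBC_imp_semi_Montel[OF assms(2,3)] assms(4)
  unfolding same_bounded_def by blast

end
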